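(* Fix $\gamma\in(0,1)$. For $n\ge1$ define $\rho_n\colon\mathbb{R}\to\{-1,0,1\}$ by $\rho_n(x)=0$ if $x\in[j4^{-n},(j+1)4^{-n})$ with $j\equiv0,3\pmod 4$, $\rho_n(x)=1$ if $j\equiv1\pmod4$, and $\rho_n(x)=-1$ if $j\equiv2\pmod4$ ($j\in\mathbb{Z}$). Let $v_n(x)=\prod_{k=1}^n(1+\gamma\rho_{2k-1}(x))$ and $v_m^*(x)=\max(v_1(x),\dots,v_m(x))$. Then there exists a constant $c>0$ (depending on $\gamma$) such that \[\int_0^1 v_m^*(x)\,dx\ge cm\qquad\text{for all }m=1,2,\dots\] *)

theory Defs
  imports "HOL-Analysis.Analysis"
begin

definition rho :: "nat \<Rightarrow> real \<Rightarrow> real" where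
  "rho n x = (let j = \<lfloor>x * 4 ^ n\<rfloor> in
     if j mod 4 = 1 then 1 else if j mod 4 = 2 then -1 else 0)"

definition vprod :: "real \<Rightarrow> nat \<Rightarrow> real \<Rightarrow> real" where
  "vprod \<gamma> n x = (\<Prod>k = 1..n. 1 + \<gamma> * rho (2 * k - 1) x)"

definition vmax :: "real \<Rightarrow> nat \<Rightarrow> real \<Rightarrow> real" where
  "vmax \<gamma> m x = Max ((\<lambda>n. vprod \<gamma> n x) ` {1..m})"

end

theory Submission
  imports Defs
begin

(* Write g for gamma and a(t) = 1 + g*(1, -1 or 0 according to t mod 4) for
   the factor contributed by one Haar function.  Since rho (n+2) y = rho n (16 y), the products
   are self-similar:  vprod g (n+1) y = a(floor (4y)) * vprod g n (16 y).  Hence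
   vmax g (k+1) y = a(floor (4y)) * R_k(16 y), where R_k = max(vprod_0 = 1, ..., vprod_k), and
   R_k is a step function on the intervals [j 16^-k, (j+1) 16^-k) whose value digit_max g k j
   obeys the recursion  digit_max (k+1) j = max 1 (a(d div 4) * digit_max k j'), where d is the
   leading base-16 digit of j and j' the word of the remaining k digits.
   The integral of vmax thus becomes an average over base-16 words.  For the sums
   S_k = sum_j digit_max k j and K = (2-g)/(2(1-g)) we show S_(k+1) >= 16 S_k + 2g (16^k - #{j. digit_max k j > K});
   the gain comes from the digit with factor 1 - g, where the "max 1" truncation helps
   whenever digit_max k j <= K.  A maximal (Markov-type) inequality bounds the exceptional
   count by 16^k/K, which gives S_k >= 16^k (1 + k delta) with delta = g^2/(8(2-g)), and
   therefore  integral of vmax g m over [0,1] >= m delta. *)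

section \<open>The Haar factor and self-similarity of the products\<close>

text \<open>The factor \<open>1 + g * rho\<close> as a function of the digit index \<open>t = floor(x * 4^n)\<close>.\<close>
definition haar_factor :: "real \<Rightarrow> int \<Rightarrow> real" where
  "haar_factor g t = 1 + g * (if t mod 4 = 1 then 1 else if t mod 4 = 2 then -1 else 0)"

lemma haar_factor_values:
  "haar_factor g 0 = 1" "haar_factor g 1 = 1 + g" "haar_factor g 2 = 1 - g" "haar_factor g 3 = 1"
  by (simp_all add: haar_factor_def)

lemma haar_factor_pos: "0 < g \<Longrightarrow> g < 1 \<Longrightarrow> 0 < haar_factor g t"
  by (simp add: haar_factor_def)

lemma haar_factor_periodic: "haar_factor g (t + 4 * q) = haar_factor g t"
  by (simp add: haar_factor_def)

lemma rho_add_2: "rho (n + 2) y = rho n (16 * y)"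
proof -
  have "\<lfloor>y * 4 ^ (n + 2)\<rfloor> = \<lfloor>16 * y * 4 ^ n\<rfloor>"
    by (simp add: power_add mult.commute mult.left_commute)
  then show ?thesis by (simp only: rho_def)
qed

lemma vprod_Suc: "vprod g (Suc n) y = haar_factor g \<lfloor>4 * y\<rfloor> * vprod g n (16 * y)"
proof -
  have "vprod g (Suc n) y = (\<Prod>k = 0..n. 1 + g * rho (2 * Suc k - 1) y)"
    unfolding vprod_def using prod.shift_bounds_cl_Suc_ivl[of "\<lambda>k. 1 + g * rho (2*k-1) y" 0 n]
    by simp
  also have "\<dots> = (1 + g * rho 1 y) * (\<Prod>k = 1..n. 1 + g * rho (2 * Suc k - 1) y)"
    by (simp add: prod.atLeast0_atMost_Suc_shift prod.atLeast_Suc_atMost[of 0])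
  also have "(\<Prod>k = 1..n. 1 + g * rho (2 * Suc k - 1) y) = vprod g n (16 * y)"
    unfolding vprod_def
  proof (rule prod.cong)
    fix k assume "k \<in> {1..n}"
    then have "2 * Suc k - 1 = (2 * k - 1) + 2" by auto
    then show "1 + g * rho (2 * Suc k - 1) y = 1 + g * rho (2 * k - 1) (16 * y)"
      by (simp only: rho_add_2)
  qed simp
  also have "1 + g * rho 1 y = haar_factor g \<lfloor>4 * y\<rfloor>"
    by (simp add: rho_def haar_factor_def Let_def mult.commute)
  finally show ?thesis .
qed

lemma Max_mult_left:
  fixes c :: "'b :: linordered_semiring"
  assumes "0 \<le> c" "finite A" "A \<noteq> {}"
  shows "Max ((\<lambda>n. c * f n) ` A) = c * Max (f ` A)"
proof -
  have "mono ((*) c)" using assms(1) by (auto simp: mono_def intro: mult_left_mono)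
  then have "c * Max (f ` A) = Max (((*) c) ` (f ` A))"
    using assms by (intro mono_Max_commute) auto
  then show ?thesis by (simp add: image_image)
qed

definition running_max :: "real \<Rightarrow> nat \<Rightarrow> real \<Rightarrow> real" where
  "running_max g k y = Max ((\<lambda>n. vprod g n y) ` {0..k})"

lemma vprod_image_Suc:
  "(\<lambda>n. vprod g n y) ` (Suc ` A) = (\<lambda>n. haar_factor g \<lfloor>4 * y\<rfloor> * vprod g n (16 * y)) ` A"
  by (simp only: image_image vprod_Suc)

lemma running_max_Suc:
  assumes "0 < g" "g < 1"
  shows "running_max g (Suc k) y = max 1 (haar_factor g \<lfloor>4 * y\<rfloor> * running_max g k (16 * y))"
proof -
  have "{0..Suc k} = insert 0 (Suc ` {0..k})" by (auto simp: image_iff)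
  then have "(\<lambda>n. vprod g n y) ` {0..Suc k}
      = insert 1 ((\<lambda>n. haar_factor g \<lfloor>4 * y\<rfloor> * vprod g n (16 * y)) ` {0..k})"
    using vprod_image_Suc[of g y "{0..k}"] by (simp add: vprod_def)
  then have "running_max g (Suc k) y
      = Max (insert 1 ((\<lambda>n. haar_factor g \<lfloor>4 * y\<rfloor> * vprod g n (16 * y)) ` {0..k}))"
    unfolding running_max_def by simp
  then show ?thesis
    unfolding running_max_def using haar_factor_pos[OF assms]
    by (subst (asm) Max_insert) (auto simp: Max_mult_left less_imp_le)
qed

lemma vmax_Suc:
  assumes "0 < g" "g < 1"
  shows "vmax g (Suc k) y = haar_factor g \<lfloor>4 * y\<rfloor> * running_max g k (16 * y)"
proof -
  have "{1..Suc k} = Suc ` {0..k}" by (auto simp: image_iff)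
  then have "(\<lambda>n. vprod g n y) ` {1..Suc k}
      = (\<lambda>n. haar_factor g \<lfloor>4 * y\<rfloor> * vprod g n (16 * y)) ` {0..k}"
    using vprod_image_Suc[of g y "{0..k}"] by simp
  then show ?thesis
    unfolding running_max_def vmax_def using haar_factor_pos[OF assms]
    by (simp add: Max_mult_left less_imp_le)
qed

section \<open>Discretisation: the running maximum on base-16 words\<close>

text \<open>\<open>digit_max g k j\<close> is the value of \<open>running_max g k\<close> on \<open>[j 16^-k, (j+1) 16^-k)\<close>;
  the leading base-16 digit of \<open>j\<close>, divided by 4, selects the first Haar factor.\<close>
primrec digit_max :: "real \<Rightarrow> nat \<Rightarrow> int \<Rightarrow> real" where
  "digit_max g 0 j = 1"
| "digit_max g (Suc k) j = max 1 (haar_factor g (j div 16 ^ k div 4) * digit_max g k j)"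

lemma digit_max_ge_1: "digit_max g k j \<ge> 1"
  by (cases k) auto

lemma leading_digit:
  fixes y :: real
  shows "\<lfloor>y * 16 ^ Suc k\<rfloor> div 16 ^ k div 4 = \<lfloor>4 * y\<rfloor>"
proof -
  have "\<lfloor>y * 16 ^ Suc k\<rfloor> div 16 ^ k = \<lfloor>y * 16 ^ Suc k / real_of_int (16 ^ k)\<rfloor>"
    by (rule floor_divide_real_eq_div[symmetric]) simp
  also have "\<dots> = \<lfloor>16 * y\<rfloor>" by (simp add: mult.commute)
  finally have "\<lfloor>y * 16 ^ Suc k\<rfloor> div 16 ^ k div 4 = \<lfloor>16 * y\<rfloor> div 4" by simp
  also have "\<dots> = \<lfloor>16 * y / real_of_int 4\<rfloor>" by (rule floor_divide_real_eq_div[symmetric]) simp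
  finally show ?thesis by simp
qed

lemma running_max_eq_digit_max:
  assumes "0 < g" "g < 1"
  shows "running_max g k y = digit_max g k \<lfloor>y * 16 ^ k\<rfloor>"
proof (induction k arbitrary: y)
  case 0
  then show ?case by (simp add: running_max_def vprod_def)
next
  case (Suc k)
  have "\<lfloor>16 * y * 16 ^ k\<rfloor> = \<lfloor>y * 16 ^ Suc k\<rfloor>" by (simp add: ac_simps)
  then show ?case
    by (simp only: running_max_Suc[OF assms] Suc digit_max.simps leading_digit)
qed

lemma digit_max_periodic: "digit_max g k (j + q * 16 ^ k) = digit_max g k j"
proof (induction k arbitrary: q)
  case 0
  then show ?case by simp
next
  case (Suc k)
  have "j + q * 16 ^ Suc k = j + (16 * q) * 16 ^ k" by simp
  then have "(j + q * 16 ^ Suc k) div 16 ^ k = j div 16 ^ k + 16 * q"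
    by (simp only: div_mult_self1 power_not_zero) simp
  then have "(j + q * 16 ^ Suc k) div 16 ^ k div 4 = j div 16 ^ k div 4 + 4 * q"
    by simp
  moreover have "digit_max g k (j + q * 16 ^ Suc k) = digit_max g k j"
    using Suc[of "16 * q"] by (simp add: ac_simps)
  ultimately show ?case by (simp add: haar_factor_periodic)
qed

lemma digit_max_Suc_split:
  assumes "r < 16 ^ k"
  shows "digit_max g (Suc k) (int (q * 16 ^ k + r))
       = max 1 (haar_factor g (int (q div 4)) * digit_max g k (int r))"
proof -
  have i: "int (q * 16 ^ k + r) = int r + int q * 16 ^ k" by simp
  have "(int r + int q * 16 ^ k) div 16 ^ k = int q"
    using assms by (simp add: div_pos_pos_trivial)
  then have "(int r + int q * 16 ^ k) div 16 ^ k div 4 = int (q div 4)" by (simp add: zdiv_int)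
  then show ?thesis unfolding i by (simp add: digit_max_periodic)
qed

lemma has_integral_step_function:
  fixes f :: "real \<Rightarrow> real" and G :: "int \<Rightarrow> real" and N :: nat
  assumes N: "N > 0" and fG: "\<And>x. 0 \<le> x \<Longrightarrow> x < 1 \<Longrightarrow> f x = G \<lfloor>x * N\<rfloor>"
  shows "(f has_integral (\<Sum>j<N. G (int j)) / N) {0..1}"
proof -
  have Npos: "real N > 0" using N by simp
  have "k \<le> N \<Longrightarrow> (f has_integral (\<Sum>j<k. G (int j)) / N) {0..real k / N}" for k
  proof (induction k)
    case 0
    then show ?case using has_integral_refl(2)[of f 0] by simp
  next
    case (Suc k)
    have le: "real k / N \<le> real (Suc k) / N" using Npos by (simp add: divide_right_mono)
    have piece: "(f has_integral G k / N) {real k / N..real (Suc k) / N}"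
    proof (rule has_integral_spike_finite[of "{real (Suc k) / N}"])
      have "(real (Suc k) / N - real k / N) * G k = G k / N"
        using Npos by (simp add: field_simps)
      then show "((\<lambda>x. G k) has_integral G k / N) {real k / N..real (Suc k) / N}"
        using has_integral_const_real[of "G k" "real k / N" "real (Suc k) / N"] le by simp
    next
      fix x assume x: "x \<in> {real k / N..real (Suc k) / N} - {real (Suc k) / N}"
      then have x1: "real k / N \<le> x" "x < real (Suc k) / N" by auto
      have "real (Suc k) / N \<le> 1" using Suc.prems Npos by simp
      then have "0 \<le> x" "x < 1" using x1 by (auto intro: order_trans[rotated])
      moreover have "\<lfloor>x * N\<rfloor> = int k"
        using x1 Npos by (simp add: floor_eq_iff field_simps)
      ultimately show "f x = G (int k)" using fG by simp
    qed simp
    have "(f has_integral (\<Sum>j<k. G (int j)) / N + G k / N) {0..real (Suc k) / N}"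
      by (rule has_integral_combine[OF _ le Suc.IH[OF Suc_leD[OF Suc.prems]] piece]) simp
    then show ?case by (simp add: add_divide_distrib)
  qed
  from this[of N] show ?thesis using N by simp
qed

lemma sum_lessThan_mult:
  fixes h :: "nat \<Rightarrow> 'b :: comm_monoid_add"
  shows "(\<Sum>j<a * b. h j) = (\<Sum>q<a. \<Sum>r<b. h (q * b + r))"
proof -
  have "(\<Sum>j<a * b. h j) = (\<Sum>q<a. sum h {q * b..<q * b + b})"
    using sum.nat_group[of h b a] by simp
  also have "\<dots> = (\<Sum>q<a. \<Sum>r<b. h (q * b + r))"
  proof (rule sum.cong)
    fix q
    show "sum h {q * b..<q * b + b} = (\<Sum>r<b. h (q * b + r))"
      using sum.shift_bounds_nat_ivl[of h 0 "q * b" b] by (simp add: atLeast0LessThan add.commute)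
  qed simp
  finally show ?thesis .
qed

text \<open>Splitting off the leading digit: its 16 values fall into 4 groups of 4 with equal factor.\<close>
lemma sum_digit_max_Suc:
  fixes H :: "real \<Rightarrow> 'b :: comm_semiring_1"
  shows "(\<Sum>j<16 ^ Suc k. H (digit_max g (Suc k) (int j)))
       = (\<Sum>d<4. 4 * (\<Sum>r<(16::nat) ^ k. H (max 1 (haar_factor g (int d) * digit_max g k (int r)))))"
proof -
  define F where "F d = (\<Sum>r<(16::nat) ^ k. H (max 1 (haar_factor g (int d) * digit_max g k (int r))))"
    for d
  have "(\<Sum>j<16 ^ Suc k. H (digit_max g (Suc k) (int j)))
      = (\<Sum>q<16. \<Sum>r<(16::nat) ^ k. H (digit_max g (Suc k) (int (q * 16 ^ k + r))))"
    using sum_lessThan_mult[of "\<lambda>j. H (digit_max g (Suc k) (int j))" 16 "16 ^ k"] by simp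
  also have "\<dots> = (\<Sum>q<16. F (q div 4))"
    unfolding F_def
  proof (intro sum.cong refl)
    fix q r assume "r \<in> {..<(16::nat) ^ k}"
    then show "H (digit_max g (Suc k) (int (q * 16 ^ k + r)))
             = H (max 1 (haar_factor g (int (q div 4)) * digit_max g k (int r)))"
      by (subst digit_max_Suc_split) auto
  qed
  also have "\<dots> = (\<Sum>q<4 * 4. F (q div 4))" by simp
  also have "\<dots> = (\<Sum>d<4. \<Sum>e<4. F ((d * 4 + e) div 4))" by (rule sum_lessThan_mult)
  also have "\<dots> = (\<Sum>d<4. 4 * F d)" by (intro sum.cong refl) simp
  finally show ?thesis unfolding F_def .
qed

lemma sum_lessThan_4: "(\<Sum>d<4::nat. u d) = u 0 + u 1 + u 2 + (u 3 :: 'b :: comm_monoid_add)"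
  by (simp add: eval_nat_numeral ac_simps)

definition digit_max_sum :: "real \<Rightarrow> nat \<Rightarrow> real" where
  "digit_max_sum g k = (\<Sum>j<(16::nat) ^ k. digit_max g k (int j))"

definition exceed_count :: "real \<Rightarrow> nat \<Rightarrow> real \<Rightarrow> real" where
  "exceed_count g k l = (\<Sum>j<(16::nat) ^ k. if digit_max g k (int j) > l then 1 else 0)"

section \<open>The maximal inequality\<close>

text \<open>Since the four factors average to 1, the products form a martingale, and the proportion
  of words whose running maximum exceeds \<open>l\<close> is at most \<open>1/l\<close>.\<close>
lemma exceed_count_le:
  assumes g: "0 < g" "g < 1" and l: "0 < l"
  shows "exceed_count g k l \<le> 16 ^ k / l"
  using l
proof (induction k arbitrary: l)
  case 0
  then show ?case by (cases "l < 1") (auto simp: exceed_count_def field_simps)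
next
  case (Suc k)
  show ?case
  proof (cases "l < 1")
    case True
    have "exceed_count g (Suc k) l \<le> (\<Sum>j<(16::nat) ^ Suc k. 1)"
      unfolding exceed_count_def by (rule sum_mono) auto
    also have "\<dots> \<le> 16 ^ Suc k / l" using True Suc.prems by (simp add: le_divide_eq)
    finally show ?thesis .
  next
    case False
    have level: "(max 1 (haar_factor g (int d) * w) > l) \<longleftrightarrow> (w > l / haar_factor g (int d))"
      for d w
      using False haar_factor_pos[OF g, of "int d"]
      by (auto simp: pos_divide_less_eq mult.commute)
    have "exceed_count g (Suc k) l = (\<Sum>d<4. 4 * exceed_count g k (l / haar_factor g (int d)))"
      unfolding exceed_count_def
      using sum_digit_max_Suc[of "\<lambda>w. if w > l then 1 else 0 :: real"] by (simp add: level)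
    also have "\<dots> \<le> (\<Sum>d<4. 4 * (16 ^ k / (l / haar_factor g (int d))))"
      using haar_factor_pos[OF g] Suc.prems by (intro sum_mono mult_left_mono Suc.IH) auto
    also have "\<dots> = 16 ^ Suc k / l"
      by (simp add: sum_lessThan_4 haar_factor_values divide_simps algebra_simps)
    finally show ?thesis .
  qed
qed

section \<open>Linear growth of the sums\<close>

text \<open>Below this level the truncation \<open>max 1\<close> gains at least \<open>g/2\<close> on the factor \<open>1 - g\<close>.\<close>
definition gain_level :: "real \<Rightarrow> real" where
  "gain_level g = (2 - g) / (2 * (1 - g))"

definition growth_rate :: "real \<Rightarrow> real" where
  "growth_rate g = g ^ 2 / (8 * (2 - g))"

lemma digit_max_sum_Suc_ge:
  assumes g: "0 < g" "g < 1"
  shows "digit_max_sum g (Suc k)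
           \<ge> 16 * digit_max_sum g k + 2 * g * (16 ^ k - exceed_count g k (gain_level g))"
proof -
  define K where "K = gain_level g"
  define A where "A d = (\<Sum>r<(16::nat) ^ k. max 1 (haar_factor g (int d) * digit_max g k (int r)))"
    for d
  have split: "digit_max_sum g (Suc k) = 4 * (A 0 + A 1 + A 2 + A 3)"
    unfolding digit_max_sum_def A_def
    using sum_digit_max_Suc[of "\<lambda>w. w"] by (simp add: sum_lessThan_4 algebra_simps)
  have A_ge: "A d \<ge> haar_factor g (int d) * digit_max_sum g k" for d
    unfolding A_def digit_max_sum_def sum_distrib_left by (rule sum_mono) simp
  have K: "(1 - g) * K = 1 - g/2"
    using g unfolding K_def gain_level_def by (simp add: field_simps)
  have gain: "max 1 ((1 - g) * w) \<ge> (1 - g) * w + g/2 * (1 - (if w > K then 1 else 0))" for w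
  proof (cases "w > K")
    case False
    then have "(1 - g) * w \<le> (1 - g) * K" using g by (intro mult_left_mono) auto
    then show ?thesis using False K by auto
  qed auto
  have "(\<Sum>r<(16::nat) ^ k. (1 - g) * digit_max g k (int r)
          + g/2 * (1 - (if digit_max g k (int r) > K then 1 else 0))) \<le> A 2"
    unfolding A_def using gain by (intro sum_mono) (simp add: haar_factor_values(3)[symmetric])
  moreover have "(\<Sum>r<(16::nat) ^ k. (1 - g) * digit_max g k (int r)
          + g/2 * (1 - (if digit_max g k (int r) > K then 1 else 0))) = (1 - g) * digit_max_sum g k + g/2 * 16 ^ k - g/2 * exceed_count g k K"
    unfolding digit_max_sum_def exceed_count_def
    by (simp add: sum.distrib sum_distrib_left sum_subtractf right_diff_distrib)
  ultimately show ?thesis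
    using split A_ge[of 0] A_ge[of 1] A_ge[of 3] by (simp add: K_def haar_factor_values algebra_simps)
qed

lemma digit_max_sum_ge:
  assumes g: "0 < g" "g < 1"
  shows "digit_max_sum g k \<ge> 16 ^ k * (1 + k * growth_rate g)"
proof (induction k)
  case 0
  then show ?case by (simp add: digit_max_sum_def)
next
  case (Suc k)
  define K where "K = gain_level g"
  have "K > 0" unfolding K_def gain_level_def using g by simp
  then have "2 * g * (16 ^ k - 16 ^ k / K) \<le> 2 * g * (16 ^ k - exceed_count g k K)"
    using exceed_count_le[OF g] g by (intro mult_left_mono) auto
  moreover have "2 * g * (16 ^ k - 16 ^ k / K) = 16 ^ Suc k * growth_rate g"
    using g unfolding K_def gain_level_def growth_rate_def by (simp add: field_simps power2_eq_square)
  ultimately show ?case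
    using digit_max_sum_Suc_ge[OF g, of k] Suc.IH unfolding K_def by (simp add: algebra_simps)
qed

lemma integral_vmax_ge:
  assumes g: "0 < g" "g < 1"
  shows "integral {0..1} (vmax g (Suc k)) \<ge> digit_max_sum g (Suc k) / 16 ^ Suc k - 1"
proof -
  define N :: nat where "N = 16 ^ Suc k"
  define G where "G j = haar_factor g (j div 16 ^ k div 4) * digit_max g k j" for j
  have "vmax g (Suc k) x = G \<lfloor>x * real N\<rfloor>" for x
    using leading_digit[of x k]
    by (simp add: vmax_Suc[OF g] running_max_eq_digit_max[OF g] G_def N_def ac_simps)
  then have "integral {0..1} (vmax g (Suc k)) = (\<Sum>j<N. G (int j)) / N"
    by (intro integral_unique has_integral_step_function) (auto simp: N_def)
  moreover have "(\<Sum>j<N. digit_max g (Suc k) (int j) - 1) \<le> (\<Sum>j<N. G (int j))"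
  proof (rule sum_mono)
    fix j
    have "G (int j) \<ge> 0"
      using haar_factor_pos[OF g] digit_max_ge_1[of g k] unfolding G_def
      by (meson less_imp_le mult_nonneg_nonneg order_trans zero_le_one)
    then show "digit_max g (Suc k) (int j) - 1 \<le> G (int j)" by (simp add: G_def)
  qed
  ultimately have "(\<Sum>j<N. digit_max g (Suc k) (int j) - 1) / N \<le> integral {0..1} (vmax g (Suc k))"
    by (simp add: divide_right_mono)
  moreover have "(\<Sum>j<N. digit_max g (Suc k) (int j) - 1) / N
      = digit_max_sum g (Suc k) / 16 ^ Suc k - 1"
    unfolding digit_max_sum_def N_def by (simp add: sum_subtractf diff_divide_distrib)
  ultimately show ?thesis by simp
qed

theorem lemma7p2:
  fixes \<gamma> :: real
  assumes "0 < \<gamma>" and "\<gamma> < 1"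
  shows "\<exists>c > 0. \<forall>m \<ge> 1. integral {0..1} (vmax \<gamma> m) \<ge> c * real m"
proof (intro exI conjI allI impI)
  show "growth_rate \<gamma> > 0" using assms by (simp add: growth_rate_def)
  fix m :: nat assume "m \<ge> 1"
  then obtain k where m: "m = Suc k" by (cases m) auto
  have "digit_max_sum \<gamma> m / 16 ^ m \<ge> 1 + m * growth_rate \<gamma>"
    using digit_max_sum_ge[OF assms, of m] by (simp add: field_simps)
  then show "integral {0..1} (vmax \<gamma> m) \<ge> growth_rate \<gamma> * real m"
    using integral_vmax_ge[OF assms, of k] unfolding m by (simp add: algebra_simps)
qed

end
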